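(* Let $A$ be a finite-dimensional real associative $^*$-algebra with unity as described in the context, let $S$ be a genuine imaginary sphere (gis) of $A$ and let $M$ be the real vector subspace of $A$ inducing $S$. Then there exists a norm $\|\cdot\|$ on the real vector space $A$ such that $\|x\|^2=n(x)$ for every $x\in M$.
   Context: $A$ is a real associative algebra with unity $1$, of finite dimension $d>0$, with $\mathbb{R}$ identified with $\mathbb{R}1$, equipped with an anti-involution $x\mapsto x^c$, i.e. a real linear map with $(x^c)^c=x$, $(xy)^c=y^cx^c$ for all $x,y\in A$, and $x^c=x$ for $x\in\mathbb{R}$. The trace is $t(x)=x+x^c$ and the (squared) norm is $n(x)=xx^c$. The quadratic cone is $Q_A=\mathbb{R}\cup\{x\in A : t(x)\in\mathbb{R},\ n(x)\in\mathbb{R},\ 4n(x)>t(x)^2\}$, and $\mathbb{S}_A=\{J\in Q_A: J^2=-1\}$ (assumed nonempty); one has $\mathbb{S}_A=\{J\in A: t(J)=0,\ n(J)=1\}$. For $J\in\mathbb{S}_A$, $\mathbb{C}_J$ is the real subalgebra spanned by $1,J$. A nonempty subset $S\subset A$ is a genuine imaginary sphere (gis) if there is a real vector subspace $M$ with $\mathbb{R}\subset M\subset Q_A$ and $S=M\cap\mathbb{S}_A$; such $M$ is unique (namely $M=\bigcup_{J\in S}\mathbb{C}_J$) and is called the subspace inducing $S$. *)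

theory Defs
  imports Complex_Main
begin

definition anti_involution :: "('a::real_algebra_1 \<Rightarrow> 'a) \<Rightarrow> bool" where
  "anti_involution cj \<longleftrightarrow>
     (\<forall>x y. cj (x + y) = cj x + cj y) \<and>
     (\<forall>(r::real) x. cj (r *\<^sub>R x) = r *\<^sub>R cj x) \<and>
     (\<forall>x. cj (cj x) = x) \<and>
     (\<forall>x y. cj (x * y) = cj y * cj x) \<and>
     (\<forall>r::real. cj (of_real r) = of_real r)"

definition trA :: "('a::real_algebra_1 \<Rightarrow> 'a) \<Rightarrow> 'a \<Rightarrow> 'a" where
  "trA cj x = x + cj x"

definition nA :: "('a::real_algebra_1 \<Rightarrow> 'a) \<Rightarrow> 'a \<Rightarrow> 'a" where
  "nA cj x = x * cj x"

definition quad_cone :: "('a::real_algebra_1 \<Rightarrow> 'a) \<Rightarrow> 'a set" where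
  "quad_cone cj = \<real> \<union> {x. \<exists>a b::real. trA cj x = of_real a \<and> nA cj x = of_real b \<and> 4 * b > a\<^sup>2}"

definition imag_sphere :: "('a::real_algebra_1 \<Rightarrow> 'a) \<Rightarrow> 'a set" where
  "imag_sphere cj = {J \<in> quad_cone cj. J * J = - 1}"

definition induces_gis :: "('a::real_algebra_1 \<Rightarrow> 'a) \<Rightarrow> 'a set \<Rightarrow> 'a set \<Rightarrow> bool" where
  "induces_gis cj M S \<longleftrightarrow> subspace M \<and> \<real> \<subseteq> M \<and> M \<subseteq> quad_cone cj \<and> S = M \<inter> imag_sphere cj"

definition gis :: "('a::real_algebra_1 \<Rightarrow> 'a) \<Rightarrow> 'a set \<Rightarrow> bool" where
  "gis cj S \<longleftrightarrow> S \<noteq> {} \<and> (\<exists>M. induces_gis cj M S)"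

definition is_norm :: "('a::real_vector \<Rightarrow> real) \<Rightarrow> bool" where
  "is_norm N \<longleftrightarrow> (\<forall>x. N x \<ge> 0) \<and> (\<forall>x. N x = 0 \<longleftrightarrow> x = 0) \<and>
     (\<forall>(r::real) x. N (r *\<^sub>R x) = \<bar>r\<bar> * N x) \<and> (\<forall>x y. N (x + y) \<le> N x + N y)"

end

theory Submission
  imports Defs
begin

text \<open>
  Every element of the quadratic cone has a real norm \<open>n(x)\<close>, positive
  unless \<open>x = 0\<close>.  Hence on the subspace \<open>M \<subseteq> Q_A\<close> the map \<open>q x = n(x)\<close> is a real-valued,
  positive definite quadratic form, and \<open>\<surd>q\<close> is a norm on \<open>M\<close>: the triangle inequality
  is the Cauchy--Schwarz argument, i.e. the discriminant of the nonnegative polynomial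
  \<open>t \<mapsto> q(t x + y)\<close> is nonpositive.  Finally, any norm on a subspace of a
  finite-dimensional real vector space extends to a norm on the whole space: choose a
  basis of \<open>M\<close>, extend it to a basis of the space, and set
  \<open>N x = p(P x) + \<Sum>\<bar>coordinates of x outside M\<bar>\<close>, with \<open>P\<close> the projection onto \<open>M\<close>.
\<close>

lemma nonneg_quadratic_discriminant:
  fixes a b c :: real
  assumes nonneg: "\<And>t. a * t^2 + b * t + c \<ge> 0" and "a \<ge> 0"
  shows "b^2 \<le> 4 * a * c"
proof (cases "a = 0")
  case True
  show ?thesis
  proof (cases "b = 0")
    case False
    have "a * (-(c+1)/b)^2 + b * (-(c+1)/b) + c \<ge> 0" using nonneg .
    with True False show ?thesis by (simp add: field_simps)
  qed (simp add: True)
next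
  case False
  with \<open>a \<ge> 0\<close> have a: "a > 0" by simp
  have "a * (-b/(2*a))^2 + b * (-b/(2*a)) + c \<ge> 0" using nonneg .
  hence "b^2/(4*a) \<le> c" using a by (simp add: power2_eq_square field_simps)
  thus ?thesis using a by (simp add: field_simps)
qed

text \<open>Cauchy--Schwarz in the form needed for the triangle inequality: if
  \<open>a t\<^sup>2 + b t + c \<ge> 0\<close> for all \<open>t\<close>, then \<open>\<surd>(a + b + c) \<le> \<surd>a + \<surd>c\<close>
  (here \<open>a = q x\<close>, \<open>c = q y\<close>, \<open>a + b + c = q (x + y)\<close>).\<close>
lemma sqrt_triangle_from_quadratic:
  fixes a b c :: real
  assumes nonneg: "\<And>t. a * t^2 + b * t + c \<ge> 0" and a: "a \<ge> 0" and c: "c \<ge> 0"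
  shows "sqrt (a + b + c) \<le> sqrt a + sqrt c"
proof -
  have "b^2 \<le> (2 * sqrt a * sqrt c)^2"
    using nonneg_quadratic_discriminant[OF nonneg a] a c by (simp add: power_mult_distrib)
  hence "b \<le> 2 * sqrt a * sqrt c"
    using a c by (meson abs_le_square_iff abs_ge_self order_trans real_sqrt_ge_zero
        mult_nonneg_nonneg zero_le_numeral power2_le_imp_le)
  hence "a + b + c \<le> (sqrt a + sqrt c)^2"
    using a c by (simp add: power2_eq_square algebra_simps)
  thus ?thesis using a c by (simp add: real_le_lsqrt)
qed

definition norm_on :: "'a::real_vector set \<Rightarrow> ('a \<Rightarrow> real) \<Rightarrow> bool" where
  "norm_on M p \<longleftrightarrow> (\<forall>x\<in>M. p x \<ge> 0) \<and> (\<forall>x\<in>M. p x = 0 \<longleftrightarrow> x = 0) \<and>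
     (\<forall>x\<in>M. \<forall>r. p (r *\<^sub>R x) = \<bar>r\<bar> * p x) \<and> (\<forall>x\<in>M. \<forall>y\<in>M. p (x + y) \<le> p x + p y)"

text \<open>In a finite-dimensional space every subspace \<open>M\<close> has a linear projection \<open>P\<close> onto it
  and a seminorm \<open>E\<close> vanishing on \<open>M\<close> that detects everything \<open>P\<close> forgets.  (\<open>E\<close> is the
  \<open>\<ell>\<^sub>1\<close>-norm of the coordinates along a basis completion of \<open>M\<close>.)\<close>
lemma projection_and_complement_seminorm:
  fixes M :: "'a::real_vector set"
  assumes findim: "\<exists>B. finite B \<and> span B = (UNIV :: 'a set)" and sub: "subspace M"
  obtains P :: "'a \<Rightarrow> 'a" and E :: "'a \<Rightarrow> real"
  where "linear P" "\<And>x. P x \<in> M" "\<And>x. x \<in> M \<Longrightarrow> P x = x"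
    "\<And>x. E x \<ge> 0" "\<And>x. x \<in> M \<Longrightarrow> E x = 0"
    "\<And>r x. E (r *\<^sub>R x) = \<bar>r\<bar> * E x" "\<And>x y. E (x + y) \<le> E x + E y"
    "\<And>x. P x = 0 \<Longrightarrow> E x = 0 \<Longrightarrow> x = 0"
proof -
  obtain B0 where B0M: "B0 \<subseteq> M" and indB0: "independent B0" and MB0: "M \<subseteq> span B0"
    using maximal_independent_subset[of M] by blast
  define C where "C = extend_basis B0"
  have B0C: "B0 \<subseteq> C" and indC: "independent C" and spC: "span C = UNIV"
    using extend_basis_superset[OF indB0] independent_extend_basis[OF indB0]
      span_extend_basis[OF indB0] unfolding C_def by auto
  obtain F :: "'a set" where F: "finite F" "span F = UNIV" using findim by blast
  have finC: "finite C" using independent_span_bound[OF F(1) indC] F(2) by auto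
  have finB0: "finite B0" using finC B0C finite_subset by blast
  define R where "R x = representation C x" for x
  have Radd: "R (x + y) c = R x c + R y c" for x y c
    unfolding R_def using representation_add[OF indC, of y x] spC by auto
  have Rscale: "R (r *\<^sub>R x) c = r * R x c" for r x c
    unfolding R_def using representation_scale[OF indC, of x r] spC by auto
  have RM: "R x c = representation B0 x c" if "x \<in> M" for x c
    unfolding R_def using representation_extend[OF indC _ B0C, of x] that MB0 by auto
  define P where "P x = (\<Sum>c\<in>B0. R x c *\<^sub>R c)" for x
  define E where "E x = (\<Sum>c\<in>C - B0. \<bar>R x c\<bar>)" for x
  show thesis
  proof
    show "linear P"
      by (rule linearI) (simp_all add: P_def Radd Rscale scaleR_add_left sum.distrib
          scaleR_sum_right)
    show "P x \<in> M" for x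
      unfolding P_def using B0M by (intro subspace_sum[OF sub] subspace_scale[OF sub]) auto
    show "P x = x" if "x \<in> M" for x
      unfolding P_def RM[OF that]
      using sum_representation_eq[OF indB0 _ finB0, of x] that MB0 by auto
    show "E x \<ge> 0" for x unfolding E_def by (simp add: sum_nonneg)
    show "E x = 0" if "x \<in> M" for x
      unfolding E_def using RM[OF that] representation_ne_zero[of B0 x]
      by (force intro!: sum.neutral)
    show "E (r *\<^sub>R x) = \<bar>r\<bar> * E x" for r x
      unfolding E_def Rscale by (simp add: abs_mult sum_distrib_left)
    show "E (x + y) \<le> E x + E y" for x y
      unfolding E_def Radd by (simp add: sum.distrib[symmetric] sum_mono abs_triangle_ineq)
    show "x = 0" if "P x = 0" "E x = 0" for x
    proof -
      have outside: "R x c = 0" if "c \<in> C - B0" for c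
        using \<open>E x = 0\<close> that finC unfolding E_def by (simp add: sum_nonneg_eq_0_iff)
      have "x = (\<Sum>c\<in>C. R x c *\<^sub>R c)"
        unfolding R_def using sum_representation_eq[OF indC _ finC] spC by auto
      also have "\<dots> = (\<Sum>c\<in>B0. R x c *\<^sub>R c) + (\<Sum>c\<in>C - B0. R x c *\<^sub>R c)"
        using sum.subset_diff[OF B0C finC] by (simp add: add.commute)
      also have "\<dots> = P x" unfolding P_def using outside by simp
      finally show ?thesis using that by simp
    qed
  qed
qed

lemma norm_extension:
  fixes M :: "'a::real_vector set" and p :: "'a \<Rightarrow> real"
  assumes findim: "\<exists>B. finite B \<and> span B = (UNIV :: 'a set)" and sub: "subspace M"
    and p: "norm_on M p"
  shows "\<exists>N. is_norm N \<and> (\<forall>x\<in>M. N x = p x)"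
proof -
  obtain P E where linP: "linear P" and PM: "\<And>x. P x \<in> M" and Pid: "\<And>x. x \<in> M \<Longrightarrow> P x = x"
    and Ege: "\<And>x. E x \<ge> 0" and EM: "\<And>x. x \<in> M \<Longrightarrow> E x = 0"
    and Escale: "\<And>r x. E (r *\<^sub>R x) = \<bar>r\<bar> * E x" and Eadd: "\<And>x y. E (x + y) \<le> E x + E y"
    and detect: "\<And>x. P x = 0 \<Longrightarrow> E x = 0 \<Longrightarrow> x = 0"
    using projection_and_complement_seminorm[OF findim sub] by blast
  have pge: "\<And>x. x \<in> M \<Longrightarrow> p x \<ge> 0" and p0: "\<And>x. x \<in> M \<Longrightarrow> p x = 0 \<longleftrightarrow> x = 0"
    and pscale: "\<And>x r. x \<in> M \<Longrightarrow> p (r *\<^sub>R x) = \<bar>r\<bar> * p x"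
    and padd: "\<And>x y. x \<in> M \<Longrightarrow> y \<in> M \<Longrightarrow> p (x + y) \<le> p x + p y"
    using p unfolding norm_on_def by auto
  define N where "N x = p (P x) + E x" for x
  have "is_norm N"
    unfolding is_norm_def
  proof (intro conjI allI)
    show "N x \<ge> 0" for x unfolding N_def using pge[OF PM] Ege by (simp add: add_nonneg_nonneg)
    show "N x = 0 \<longleftrightarrow> x = 0" for x
    proof
      assume "N x = 0"
      hence "p (P x) = 0" "E x = 0" using pge[OF PM, of x] Ege[of x] unfolding N_def by linarith+
      thus "x = 0" using p0[OF PM] detect by blast
    qed (simp add: N_def linear_0[OF linP] EM subspace_0[OF sub] p0 PM)
    show "N (r *\<^sub>R x) = \<bar>r\<bar> * N x" for r x
      unfolding N_def linear_scale[OF linP] pscale[OF PM] Escale by (simp add: algebra_simps)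
    show "N (x + y) \<le> N x + N y" for x y
      using padd[OF PM PM, of x y] Eadd[of x y] unfolding N_def linear_add[OF linP] by simp
  qed
  moreover have "N x = p x" if "x \<in> M" for x
    unfolding N_def Pid[OF that] EM[OF that] by simp
  ultimately show ?thesis by blast
qed

lemma nA_add:
  assumes "anti_involution cj"
  shows "nA cj (x + y) = nA cj x + nA cj y + (x * cj y + y * cj x)"
  using assms unfolding anti_involution_def nA_def by (simp add: algebra_simps)

lemma nA_scale:
  assumes "anti_involution cj"
  shows "nA cj (r *\<^sub>R x) = (r^2) *\<^sub>R nA cj x"
  using assms unfolding anti_involution_def nA_def by (simp add: power2_eq_square)

text \<open>On the quadratic cone the norm is real, and positive away from \<open>0\<close>: for a real
  \<open>x = a\<close> it is \<open>a\<^sup>2\<close>; otherwise \<open>4 n(x) > t(x)\<^sup>2 \<ge> 0\<close>.\<close>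
lemma quad_cone_nA_real_pos:
  assumes inv: "anti_involution cj" and x: "x \<in> quad_cone cj"
  shows "\<exists>r. nA cj x = of_real r \<and> (x \<noteq> 0 \<longrightarrow> r > 0)"
proof -
  consider (real) "x \<in> \<real>"
    | (nonreal) a b where "nA cj x = of_real b" "4 * b > a\<^sup>2"
    using x unfolding quad_cone_def by blast
  then show ?thesis
  proof cases
    case real
    then obtain a where a: "x = of_real a" by (auto elim: Reals_cases)
    have "nA cj x = of_real (a^2)"
      using inv unfolding a anti_involution_def nA_def by (simp add: power2_eq_square)
    then show ?thesis using a by (intro exI[of _ "a^2"]) simp
  next
    case nonreal
    have "b > 0" using nonreal(2) by (smt (verit) zero_le_power2)
    then show ?thesis using nonreal by auto
  qed
qed

text \<open>The real number \<open>n(x)\<close>, meaningful whenever \<open>n(x) \<in> \<real>\<close>.\<close>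
definition nA_real :: "('a::real_algebra_1 \<Rightarrow> 'a) \<Rightarrow> 'a \<Rightarrow> real" where
  "nA_real cj x = (THE r. nA cj x = of_real r)"

lemma nA_real_eq:
  assumes "nA cj x = of_real r"
  shows "nA_real cj x = r"
  unfolding nA_real_def by (rule the_equality) (use assms in auto)

text \<open>Along a line \<open>t \<mapsto> t x + y\<close> in a subspace of the cone, \<open>n\<close> is a real quadratic
  polynomial in \<open>t\<close>; its linear coefficient comes from polarization.\<close>
lemma nA_real_line:
  assumes inv: "anti_involution cj" and sub: "subspace M" and MQ: "M \<subseteq> quad_cone cj"
    and x: "x \<in> M" and y: "y \<in> M"
  shows "nA_real cj (t *\<^sub>R x + y) = nA_real cj x * t^2
           + (nA_real cj (x + y) - nA_real cj x - nA_real cj y) * t + nA_real cj y"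
proof -
  have real: "nA cj z = of_real (nA_real cj z)" if "z \<in> M" for z
    using quad_cone_nA_real_pos[OF inv, of z] that MQ nA_real_eq by blast
  have txy: "t *\<^sub>R x + y \<in> M" "x + y \<in> M"
    using x y sub by (auto intro: subspace_add subspace_scale)
  have polar: "x * cj y + y * cj x = of_real (nA_real cj (x + y) - nA_real cj x - nA_real cj y)"
    using nA_add[OF inv, of x y] real[OF txy(2)] real[OF x] real[OF y] by simp
  have cj_scale: "cj (t *\<^sub>R x) = t *\<^sub>R cj x" using inv unfolding anti_involution_def by blast
  have "of_real (nA_real cj (t *\<^sub>R x + y))
        = nA cj (t *\<^sub>R x) + nA cj y + ((t *\<^sub>R x) * cj y + y * cj (t *\<^sub>R x))"
    using real[OF txy(1)] nA_add[OF inv, of "t *\<^sub>R x" y] by simp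
  also have "\<dots> = (t^2) *\<^sub>R nA cj x + nA cj y + t *\<^sub>R (x * cj y + y * cj x)"
    using nA_scale[OF inv, of t x] cj_scale by (simp add: algebra_simps)
  also have "\<dots> = (of_real (nA_real cj x * t^2
           + (nA_real cj (x + y) - nA_real cj x - nA_real cj y) * t + nA_real cj y) :: 'a)"
    unfolding polar real[OF x] real[OF y] by (simp add: of_real_def algebra_simps)
  finally show ?thesis by (simp only: of_real_eq_iff)
qed

lemma sqrt_nA_norm_on:
  assumes inv: "anti_involution cj" and sub: "subspace M" and MQ: "M \<subseteq> quad_cone cj"
  shows "norm_on M (\<lambda>x. sqrt (nA_real cj x))"
proof -
  let ?q = "nA_real cj"
  have real: "nA cj x = of_real (?q x)" and pos: "x \<noteq> 0 \<Longrightarrow> ?q x > 0" if "x \<in> M" for x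
    using quad_cone_nA_real_pos[OF inv, of x] that MQ nA_real_eq by blast+
  have q0: "?q 0 = 0" by (rule nA_real_eq) (simp add: nA_def)
  have qge: "?q x \<ge> 0" if "x \<in> M" for x
    using pos[OF that] q0 by (cases "x = 0") auto
  have qscale: "?q (r *\<^sub>R x) = r^2 * ?q x" if "x \<in> M" for x r
  proof (rule nA_real_eq)
    show "nA cj (r *\<^sub>R x) = of_real (r^2 * ?q x)"
      using nA_scale[OF inv, of r x] real[OF that] by (simp add: scaleR_conv_of_real)
  qed
  have tri: "sqrt (?q (x + y)) \<le> sqrt (?q x) + sqrt (?q y)" if "x \<in> M" "y \<in> M" for x y
  proof -
    have "?q x * t^2 + (?q (x + y) - ?q x - ?q y) * t + ?q y \<ge> 0" for t
      using nA_real_line[OF inv sub MQ that, of t] qge[of "t *\<^sub>R x + y"] that sub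
      by (simp add: subspace_add subspace_scale)
    from sqrt_triangle_from_quadratic[OF this qge qge] that show ?thesis by simp
  qed
  show ?thesis
    unfolding norm_on_def
    using qge pos q0 tri by (force simp: qscale real_sqrt_mult)
qed

theorem lemma1:
  fixes cj :: "'a::real_algebra_1 \<Rightarrow> 'a" and S M :: "'a set"
  assumes findim: "\<exists>B. finite B \<and> span B = (UNIV :: 'a set)"
    and inv: "anti_involution cj"
    and SA_ne: "imag_sphere cj \<noteq> {}"
    and S_gis: "gis cj S"
    and M_ind: "induces_gis cj M S"
  shows "\<exists>N :: 'a \<Rightarrow> real. is_norm N \<and> (\<forall>x\<in>M. nA cj x = of_real ((N x)\<^sup>2))"
proof -
  have sub: "subspace M" and MQ: "M \<subseteq> quad_cone cj"
    using M_ind unfolding induces_gis_def by auto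
  obtain N where N: "is_norm N" and NM: "\<forall>x\<in>M. N x = sqrt (nA_real cj x)"
    using norm_extension[OF findim sub sqrt_nA_norm_on[OF inv sub MQ]] by blast
  have "nA cj x = of_real ((N x)\<^sup>2)" if x: "x \<in> M" for x
  proof -
    obtain r where r: "nA cj x = of_real r" "x \<noteq> 0 \<longrightarrow> r > 0"
      using quad_cone_nA_real_pos[OF inv] x MQ by blast
    have "r \<ge> 0" using r x by (cases "x = 0") (auto simp: nA_def)
    then show ?thesis using NM x r nA_real_eq[OF r(1)] by simp
  qed
  with N show ?thesis by blast
qed

end
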